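(* Let $s=(s_1,\ldots,s_n)$ be a sequence of positive integers. Then the local $h^\ast$-polynomial of the $s$-lecture hall simplex $P_n^s$ is \[ \ell^\ast(P_n^s;z)=\sum_{e\in\widetilde{I_n^s}}z^{\mathrm{asc}(e)}=\sum_{e\in\widetilde{I_n^s}}z^{\mathrm{des}(e)}. \]
   Context: $P_n^s=\{x\in\mathbb{R}^n: 0\le x_1/s_1\le\cdots\le x_n/s_n\le 1\}$. For a lattice $d$-simplex $\Delta=\mathrm{conv}(v^{(0)},\ldots,v^{(d)})\subset\mathbb{R}^n$, $\ell^\ast(\Delta;z)=\sum_{x\in\Pi^\circ_\Delta\cap\mathbb{Z}^{n+1}}z^{x_{n+1}}$ where $\Pi^\circ_\Delta=\{\sum_{i=0}^d\lambda_i(v^{(i)},1): 0<\lambda_i<1\}$. Set $s_0=s_{n+1}=1$ and let $\widetilde{I_n^s}$ be the set of integer sequences $(e_0,e_1,\ldots,e_{n+1})$ with $e_0=e_{n+1}=0$, $0\le e_i<s_i$ for $i\in[n]$, and $e_i/s_i\neq e_{i+1}/s_{i+1}$ for all $i\in\{0,\ldots,n\}$. For such $e$, an index $i\in\{0,\ldots,n\}$ is an ascent if $e_i/s_i<e_{i+1}/s_{i+1}$ and a descent if $e_i/s_i>e_{i+1}/s_{i+1}$; $\mathrm{asc}(e),\mathrm{des}(e)$ count them. *)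

theory Defs
  imports "HOL-Analysis.Analysis" "HOL-Computational_Algebra.Polynomial"
begin

text \<open>Points of R^n are modelled as functions nat => real with coordinates 1..n
  (all other coordinates are 0).\<close>

definition lecture_hall_simplex :: "nat \<Rightarrow> (nat \<Rightarrow> nat) \<Rightarrow> (nat \<Rightarrow> real) set" where
  "lecture_hall_simplex n s = {x.
     (\<forall>j. (j = 0 \<or> j > n) \<longrightarrow> x j = 0) \<and>
     (n \<ge> 1 \<longrightarrow> 0 \<le> x 1 / real (s 1)) \<and>
     (\<forall>i\<in>{1..<n}. x i / real (s i) \<le> x (i+1) / real (s (i+1))) \<and>
     (n \<ge> 1 \<longrightarrow> x n / real (s n) \<le> 1)}"

definition is_vertex :: "(nat \<Rightarrow> real) set \<Rightarrow> (nat \<Rightarrow> real) \<Rightarrow> bool" where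
  "is_vertex P v \<longleftrightarrow> v \<in> P \<and>
     \<not> (\<exists>a\<in>P. \<exists>b\<in>P. a \<noteq> b \<and> (\<exists>t. 0 < t \<and> t < 1 \<and> v = (\<lambda>j. (1 - t) * a j + t * b j)))"

text \<open>The open fundamental parallelepiped of the cone over the simplex with vertex set
  vertices(P): points (sum lambda_v v, sum lambda_v) with 0 < lambda_v < 1.\<close>
definition open_parallelepiped :: "(nat \<Rightarrow> real) set \<Rightarrow> ((nat \<Rightarrow> real) \<times> real) set" where
  "open_parallelepiped P = {((\<lambda>j. \<Sum>v\<in>{v. is_vertex P v}. lam v * v j), \<Sum>v\<in>{v. is_vertex P v}. lam v) | lam.
       \<forall>v. is_vertex P v \<longrightarrow> 0 < lam v \<and> lam v < 1}"

definition lattice_points :: "((nat \<Rightarrow> real) \<times> real) set \<Rightarrow> ((nat \<Rightarrow> real) \<times> real) set" where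
  "lattice_points S = {p \<in> S. (\<forall>j. fst p j \<in> \<int>) \<and> snd p \<in> \<int>}"

definition local_hstar :: "(nat \<Rightarrow> real) set \<Rightarrow> int poly" where
  "local_hstar P = (\<Sum>p\<in>lattice_points (open_parallelepiped P). monom 1 (nat \<lfloor>snd p\<rfloor>))"

definition s_ext :: "nat \<Rightarrow> (nat \<Rightarrow> nat) \<Rightarrow> nat \<Rightarrow> nat" where
  "s_ext n s i = (if i = 0 \<or> i = n + 1 then 1 else s i)"

definition ratio :: "nat \<Rightarrow> (nat \<Rightarrow> nat) \<Rightarrow> (nat \<Rightarrow> nat) \<Rightarrow> nat \<Rightarrow> real" where
  "ratio n s e i = real (e i) / real (s_ext n s i)"

definition I_tilde :: "nat \<Rightarrow> (nat \<Rightarrow> nat) \<Rightarrow> (nat \<Rightarrow> nat) set" where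
  "I_tilde n s = {e. e 0 = 0 \<and> e (n+1) = 0 \<and> (\<forall>j > n + 1. e j = 0) \<and>
      (\<forall>i\<in>{1..n}. e i < s i) \<and>
      (\<forall>i\<in>{0..n}. ratio n s e i \<noteq> ratio n s e (i+1))}"

definition asc :: "nat \<Rightarrow> (nat \<Rightarrow> nat) \<Rightarrow> (nat \<Rightarrow> nat) \<Rightarrow> nat" where
  "asc n s e = card {i\<in>{0..n}. ratio n s e i < ratio n s e (i+1)}"

definition des :: "nat \<Rightarrow> (nat \<Rightarrow> nat) \<Rightarrow> (nat \<Rightarrow> nat) \<Rightarrow> nat" where
  "des n s e = card {i\<in>{0..n}. ratio n s e i > ratio n s e (i+1)}"

end

theory Submission
  imports Defs
begin

text \<open>The vertices of \<open>P\<^sub>n\<^sup>s\<close> are \<open>v\<^sub>k = (0,\<dots>,0,s\<^sub>k\<^sub>+\<^sub>1,\<dots>,s\<^sub>n)\<close> for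
  \<open>k = 0,\<dots>,n\<close>. If \<open>\<lambda>\<^sub>k\<close> is the coefficient of \<open>(v\<^sub>k,1)\<close> and
  \<open>L\<^sub>j = \<lambda>\<^sub>0 + \<dots> + \<lambda>\<^sub>j\<^sub>-\<^sub>1\<close>, a point of the open parallelepiped is
  \<open>(s\<^sub>1L\<^sub>1,\<dots>,s\<^sub>nL\<^sub>n, L\<^sub>n\<^sub>+\<^sub>1)\<close> with \<open>L\<^sub>0 = 0\<close> and all increments in \<open>(0,1)\<close>.
  It is a lattice point iff \<open>frac L\<^sub>j = e\<^sub>j/s\<^sub>j\<close> with integers \<open>0 \<le> e\<^sub>j < s\<^sub>j\<close> and
  \<open>e\<^sub>0 = e\<^sub>n\<^sub>+\<^sub>1 = 0\<close>. An increment lies in \<open>(0,1)\<close> iff the consecutive fractional parts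
  differ, and then \<open>\<lfloor>L\<rfloor>\<close> goes up by one exactly where the fractional part drops, i.e. at the
  descents of \<open>e\<close>. So the lattice points correspond to \<open>e \<in> I_tilde n s\<close>, at height
  \<open>des e\<close>. Finally, replacing every nonzero \<open>e\<^sub>i\<close> by \<open>s\<^sub>i - e\<^sub>i\<close> is an involution
  of \<open>I_tilde n s\<close> turning descents into ascents.\<close>

section \<open>Vertices of the lecture hall simplex\<close>

lemma lecture_hall_simplex_coord_eq_0:
  assumes "x \<in> lecture_hall_simplex n s" "\<not> (1 \<le> j \<and> j \<le> n)"
  shows "x j = 0"
proof -
  from assms(2) have "j = 0 \<or> n < j" by auto
  with assms(1) show ?thesis by (auto simp: lecture_hall_simplex_def)
qed

lemma lecture_hall_simplex_ratio_mono:
  assumes x: "x \<in> lecture_hall_simplex n s" and "1 \<le> i" "i \<le> j" "j \<le> n"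
  shows "x i / real (s i) \<le> x j / real (s j)"
  using assms(3,4)
proof (induction j rule: dec_induct)
  case (step m)
  then have "x m / real (s m) \<le> x (Suc m) / real (s (Suc m))"
    using x \<open>1 \<le> i\<close> by (auto simp: lecture_hall_simplex_def)
  with step show ?case by simp
qed simp

lemma lecture_hall_simplex_ratio_bounds:
  assumes x: "x \<in> lecture_hall_simplex n s" and "1 \<le> i" "i \<le> n"
  shows "0 \<le> x i / real (s i)" "x i / real (s i) \<le> 1"
  using lecture_hall_simplex_ratio_mono[OF x, of 1 i] lecture_hall_simplex_ratio_mono[OF x, of i n]
    x assms(2,3) by (auto simp: lecture_hall_simplex_def)

lemma lecture_hall_simplex_map_ratios:
  assumes x: "x \<in> lecture_hall_simplex n s" and pos: "\<forall>i\<in>{1..n}. s i > 0"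
    and f: "mono_on {0..1} f" "f ` {0..1} \<subseteq> {0..1}"
  shows "(\<lambda>j. if 1 \<le> j \<and> j \<le> n then real (s j) * f (x j / real (s j)) else 0)
           \<in> lecture_hall_simplex n s" (is "?y \<in> _")
proof -
  have y: "?y j / real (s j) = f (x j / real (s j))" if "1 \<le> j" "j \<le> n" for j
    using pos that by auto
  have in_unit: "x j / real (s j) \<in> {0..1}" if "1 \<le> j" "j \<le> n" for j
    using lecture_hall_simplex_ratio_bounds[OF x that] by simp
  have "f (x j / real (s j)) \<le> f (x (Suc j) / real (s (Suc j)))" if "1 \<le> j" "j < n" for j
    using x that in_unit[of j] in_unit[of "Suc j"]
    by (intro mono_onD[OF f(1)]) (auto simp: lecture_hall_simplex_def)
  moreover have "f (x j / real (s j)) \<in> {0..1}" if "1 \<le> j" "j \<le> n" for j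
    using f(2) in_unit[OF that] by blast
  ultimately show ?thesis
    unfolding lecture_hall_simplex_def using y by (auto simp del: of_nat_Suc)
qed

definition lecture_hall_vertex :: "nat \<Rightarrow> (nat \<Rightarrow> nat) \<Rightarrow> nat \<Rightarrow> nat \<Rightarrow> real" where
  "lecture_hall_vertex n s k j = (if k < j \<and> j \<le> n then real (s j) else 0)"

lemma lecture_hall_vertex_mem:
  assumes "\<forall>i\<in>{1..n}. s i > 0"
  shows "lecture_hall_vertex n s k \<in> lecture_hall_simplex n s"
  using assms by (auto simp: lecture_hall_simplex_def lecture_hall_vertex_def)

lemma convex_combination_eq_endpoint:
  fixes a b t :: real
  assumes "a \<in> {0..1}" "b \<in> {0..1}" "0 < t" "t < 1" "(1 - t) * a + t * b \<in> {0, 1}"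
  shows "a = b"
proof -
  have nonneg: "(1 - t) * a \<ge> 0" "t * b \<ge> 0" "(1 - t) * (1 - a) \<ge> 0" "t * (1 - b) \<ge> 0"
    using assms by simp_all
  consider "(1 - t) * a + t * b = 0" | "(1 - t) * (1 - a) + t * (1 - b) = 0"
    using assms(5) by (auto simp: algebra_simps)
  then show ?thesis
  proof cases
    case 1
    then have "(1 - t) * a = 0" "t * b = 0" using nonneg by linarith+
    then show ?thesis using assms(3,4) by simp
  next
    case 2
    then have "(1 - t) * (1 - a) = 0" "t * (1 - b) = 0" using nonneg by linarith+
    then show ?thesis using assms(3,4) by simp
  qed
qed

lemma is_vertex_lecture_hall_vertex:
  assumes pos: "\<forall>i\<in>{1..n}. s i > 0"
  shows "is_vertex (lecture_hall_simplex n s) (lecture_hall_vertex n s k)"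
  unfolding is_vertex_def
proof (intro conjI notI)
  show "lecture_hall_vertex n s k \<in> lecture_hall_simplex n s"
    using lecture_hall_vertex_mem[OF pos] .
next
  assume "\<exists>a\<in>lecture_hall_simplex n s. \<exists>b\<in>lecture_hall_simplex n s. a \<noteq> b \<and>
    (\<exists>t>0. t < 1 \<and> lecture_hall_vertex n s k = (\<lambda>j. (1 - t) * a j + t * b j))"
  then obtain a b t where a: "a \<in> lecture_hall_simplex n s" and b: "b \<in> lecture_hall_simplex n s"
    and "a \<noteq> b" and t: "0 < t" "t < 1"
    and v: "lecture_hall_vertex n s k = (\<lambda>j. (1 - t) * a j + t * b j)"
    by blast
  have "a j = b j" for j
  proof (cases "1 \<le> j \<and> j \<le> n")
    case True
    then have sj: "real (s j) > 0" using pos by auto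
    have "(1 - t) * (a j / real (s j)) + t * (b j / real (s j))
            = lecture_hall_vertex n s k j / real (s j)"
      using fun_cong[OF v, of j] by (simp add: add_divide_distrib)
    also have "\<dots> \<in> {0, 1}" using sj by (simp add: lecture_hall_vertex_def)
    finally have "a j / real (s j) = b j / real (s j)"
      using lecture_hall_simplex_ratio_bounds[OF a, of j] lecture_hall_simplex_ratio_bounds[OF b, of j]
        True t by (intro convex_combination_eq_endpoint) auto
    then show ?thesis using sj by simp
  next
    case False
    then show ?thesis
      using lecture_hall_simplex_coord_eq_0[OF a False] lecture_hall_simplex_coord_eq_0[OF b False]
      by simp
  qed
  with \<open>a \<noteq> b\<close> show False by blast
qed

text \<open>Cutting the ratios at the fractional value \<open>c\<close> and rescaling both parts to \<open>[0,1]\<close>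
  writes the point as a proper convex combination of two points of the simplex.\<close>
lemma lecture_hall_simplex_fractional_not_vertex:
  assumes x: "x \<in> lecture_hall_simplex n s" and pos: "\<forall>i\<in>{1..n}. s i > 0"
    and i: "1 \<le> i" "i \<le> n" "x i / real (s i) \<notin> {0, 1}"
  shows "\<not> is_vertex (lecture_hall_simplex n s) x"
proof -
  define c where "c = x i / real (s i)"
  have "0 \<le> c" "c \<le> 1" "c \<noteq> 0" "c \<noteq> 1"
    using lecture_hall_simplex_ratio_bounds[OF x i(1,2)] i(3) unfolding c_def by auto
  then have c: "0 < c" "c < 1" by simp_all
  define f where "f y = min y c / c" for y
  define g where "g y = max (y - c) 0 / (1 - c)" for y
  define lift where "lift h j = (if 1 \<le> j \<and> j \<le> n then real (s j) * h (x j / real (s j)) else 0)"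
    for h :: "real \<Rightarrow> real" and j
  have "mono_on {0..1} f" "f ` {0..1} \<subseteq> {0..1}"
    using c by (auto simp: f_def mono_on_def divide_right_mono)
  then have a: "lift f \<in> lecture_hall_simplex n s"
    unfolding lift_def by (rule lecture_hall_simplex_map_ratios[OF x pos])
  have "mono_on {0..1} g" "g ` {0..1} \<subseteq> {0..1}"
    using c by (auto simp: g_def mono_on_def divide_right_mono)
  then have b: "lift g \<in> lecture_hall_simplex n s"
    unfolding lift_def by (rule lecture_hall_simplex_map_ratios[OF x pos])
  have "lift f i \<noteq> lift g i"
    using c i pos by (auto simp: lift_def f_def g_def c_def[symmetric])
  then have "lift f \<noteq> lift g" by metis
  moreover have "x = (\<lambda>j. (1 - (1 - c)) * lift f j + (1 - c) * lift g j)"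
  proof
    fix j
    show "x j = (1 - (1 - c)) * lift f j + (1 - c) * lift g j"
    proof (cases "1 \<le> j \<and> j \<le> n")
      case True
      have "(1 - (1 - c)) * lift f j + (1 - c) * lift g j
          = real (s j) * (c * f (x j / real (s j)) + (1 - c) * g (x j / real (s j)))"
        using True by (simp add: lift_def algebra_simps)
      also have "c * f y + (1 - c) * g y = y" for y
        using c by (simp add: f_def g_def min_def max_def)
      finally show ?thesis using True pos by simp
    next
      case False
      then show ?thesis using lecture_hall_simplex_coord_eq_0[OF x False] by (auto simp: lift_def)
    qed
  qed
  moreover have "0 < 1 - c" "1 - c < 1" using c by simp_all
  ultimately show ?thesis using a b unfolding is_vertex_def by blast
qed

lemma lecture_hall_simplex_0_1_point_eq_vertex:
  assumes x: "x \<in> lecture_hall_simplex n s" and pos: "\<forall>i\<in>{1..n}. s i > 0"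
    and ratios: "\<forall>i\<in>{1..n}. x i / real (s i) \<in> {0, 1}"
  shows "\<exists>k\<le>n. x = lecture_hall_vertex n s k"
proof -
  define Z where "Z = {i\<in>{1..n}. x i / real (s i) = 0}"
  define k where "k = Max (insert 0 Z)"
  have "finite Z" by (simp add: Z_def)
  then have k: "k \<in> insert 0 Z" "\<And>i. i \<in> Z \<Longrightarrow> i \<le> k"
    unfolding k_def using Max_in[of "insert 0 Z"] Max_ge[of "insert 0 Z"] by auto
  have "k \<le> n" using k(1) by (auto simp: Z_def)
  moreover have "x j = lecture_hall_vertex n s k j" for j
  proof (cases "1 \<le> j \<and> j \<le> n")
    case j: True
    then have sj: "real (s j) > 0" using pos by auto
    show ?thesis
    proof (cases "j \<le> k")
      case True
      with j k(1) have "k \<in> Z" by auto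
      then have "x j / real (s j) \<le> 0"
        using lecture_hall_simplex_ratio_mono[OF x, of j k] True j
        by (auto simp: Z_def)
      then have "x j = 0"
        using lecture_hall_simplex_ratio_bounds(1)[OF x, of j] j sj by simp
      then show ?thesis using True by (simp add: lecture_hall_vertex_def)
    next
      case False
      then have "j \<notin> Z" using k(2) by force
      then have "x j / real (s j) \<noteq> 0" using j by (simp add: Z_def)
      moreover have "x j / real (s j) \<in> {0, 1}" using ratios j by simp
      ultimately have "x j / real (s j) = 1" by blast
      then show ?thesis using False j sj by (simp add: lecture_hall_vertex_def)
    qed
  next
    case False
    then show ?thesis
      using lecture_hall_simplex_coord_eq_0[OF x False] by (auto simp: lecture_hall_vertex_def)
  qed
  ultimately show ?thesis by blast
qed

lemma vertices_lecture_hall_simplex: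
  assumes pos: "\<forall>i\<in>{1..n}. s i > 0"
  shows "{v. is_vertex (lecture_hall_simplex n s) v} = lecture_hall_vertex n s ` {..n}"
proof (intro set_eqI iffI)
  fix v assume "v \<in> {v. is_vertex (lecture_hall_simplex n s) v}"
  then have v: "is_vertex (lecture_hall_simplex n s) v" by simp
  then have vP: "v \<in> lecture_hall_simplex n s" by (simp add: is_vertex_def)
  moreover have "v i / real (s i) \<in> {0, 1}" if "i \<in> {1..n}" for i
  proof (rule ccontr)
    assume "v i / real (s i) \<notin> {0, 1}"
    moreover from that have "1 \<le> i" "i \<le> n" by simp_all
    ultimately have "\<not> is_vertex (lecture_hall_simplex n s) v"
      by (intro lecture_hall_simplex_fractional_not_vertex[OF vP pos])
    with v show False by contradiction
  qed
  ultimately have "\<exists>k\<le>n. v = lecture_hall_vertex n s k"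
    by (intro lecture_hall_simplex_0_1_point_eq_vertex[OF _ pos]) auto
  then show "v \<in> lecture_hall_vertex n s ` {..n}" by auto
qed (use is_vertex_lecture_hall_vertex[OF pos] in auto)

lemma inj_on_lecture_hall_vertex:
  assumes pos: "\<forall>i\<in>{1..n}. s i > 0"
  shows "inj_on (lecture_hall_vertex n s) {..n}"
proof (rule inj_onI)
  fix k m assume km: "k \<in> {..n}" "m \<in> {..n}"
    and eq: "lecture_hall_vertex n s k = lecture_hall_vertex n s m"
  show "k = m"
  proof (rule ccontr)
    assume "k \<noteq> m"
    with km pos have "s (max k m) > 0" by auto
    with \<open>k \<noteq> m\<close> km
    have "lecture_hall_vertex n s k (max k m) \<noteq> lecture_hall_vertex n s m (max k m)"
      by (auto simp: lecture_hall_vertex_def max_def)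
    with eq show False by simp
  qed
qed

lemma sum_lecture_hall_vertex:
  "(\<Sum>k\<le>n. l k * lecture_hall_vertex n s k j)
     = (if 1 \<le> j \<and> j \<le> n then real (s j) * (\<Sum>k<j. l k) else 0)"
proof (cases "1 \<le> j \<and> j \<le> n")
  case True
  then have "(\<Sum>k\<le>n. l k * lecture_hall_vertex n s k j) = (\<Sum>k<j. l k * real (s j))"
    by (intro sum.mono_neutral_cong_right) (auto simp: lecture_hall_vertex_def)
  with True show ?thesis by (simp add: sum_distrib_right[symmetric] mult.commute)
qed (auto simp: lecture_hall_vertex_def)

section \<open>The open parallelepiped\<close>

text \<open>Points of the cone are parametrised by the partial sums
  \<open>L j = \<lambda>\<^sub>0 + \<dots> + \<lambda>\<^sub>j\<^sub>-\<^sub>1\<close> of the coefficients of the \<open>(v\<^sub>k, 1)\<close>.\<close>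
definition cone_point :: "nat \<Rightarrow> (nat \<Rightarrow> nat) \<Rightarrow> (nat \<Rightarrow> real) \<Rightarrow> (nat \<Rightarrow> real) \<times> real" where
  "cone_point n s L = ((\<lambda>j. if 1 \<le> j \<and> j \<le> n then real (s j) * L j else 0), L (Suc n))"

lemma cone_point_cong:
  assumes "\<And>j. j \<le> Suc n \<Longrightarrow> L j = L' j"
  shows "cone_point n s L = cone_point n s L'"
  using assms by (auto simp: cone_point_def)

lemma open_parallelepiped_lecture_hall_simplex:
  assumes pos: "\<forall>i\<in>{1..n}. s i > 0"
  shows "open_parallelepiped (lecture_hall_simplex n s) =
    {cone_point n s L | L. L 0 = 0 \<and> (\<forall>k\<le>n. L k < L (Suc k) \<and> L (Suc k) < L k + 1)}"
    (is "_ = ?C")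
proof -
  let ?P = "lecture_hall_simplex n s" and ?v = "lecture_hall_vertex n s"
  have sum_vertices: "(\<Sum>v | is_vertex ?P v. f v) = (\<Sum>k\<le>n. f (?v k))" for f :: "_ \<Rightarrow> real"
    by (simp add: vertices_lecture_hall_simplex[OF pos]
        sum.reindex[OF inj_on_lecture_hall_vertex[OF pos]])
  have point: "((\<lambda>j. \<Sum>v | is_vertex ?P v. lam v * v j), \<Sum>v | is_vertex ?P v. lam v)
      = cone_point n s (\<lambda>j. \<Sum>k<j. lam (?v k))" for lam
    by (simp add: sum_vertices sum_lecture_hall_vertex cone_point_def lessThan_Suc_atMost)
  show ?thesis
  proof (intro set_eqI iffI)
    fix p assume "p \<in> open_parallelepiped ?P"
    then obtain lam where p: "p = cone_point n s (\<lambda>j. \<Sum>k<j. lam (?v k))"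
      and lam: "\<forall>v. is_vertex ?P v \<longrightarrow> 0 < lam v \<and> lam v < 1"
      unfolding open_parallelepiped_def point by blast
    have "0 < lam (?v k) \<and> lam (?v k) < 1" for k
      using lam is_vertex_lecture_hall_vertex[OF pos] by blast
    then show "p \<in> ?C" unfolding p by force
  next
    fix p assume "p \<in> ?C"
    then obtain L where p: "p = cone_point n s L" and L0: "L 0 = 0"
      and L: "\<forall>k\<le>n. L k < L (Suc k) \<and> L (Suc k) < L k + 1"
      by blast
    define lam where "lam v = L (Suc (inv_into {..n} ?v v)) - L (inv_into {..n} ?v v)" for v
    have lam_v: "lam (?v k) = L (Suc k) - L k" if "k \<le> n" for k
      using inv_into_f_f[OF inj_on_lecture_hall_vertex[OF pos]] that by (simp add: lam_def)
    have "(\<Sum>k<j. lam (?v k)) = L j" if "j \<le> Suc n" for j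
      using that L0 by (simp add: lam_v sum_lessThan_telescope)
    then have "p = cone_point n s (\<lambda>j. \<Sum>k<j. lam (?v k))"
      unfolding p by (intro cone_point_cong) simp
    moreover have "0 < lam v \<and> lam v < 1" if "is_vertex ?P v" for v
    proof -
      from that obtain k where "k \<le> n" "v = ?v k"
        using vertices_lecture_hall_simplex[OF pos] by blast
      with L lam_v show ?thesis by force
    qed
    ultimately show "p \<in> open_parallelepiped ?P"
      unfolding open_parallelepiped_def point by blast
  qed
qed

section \<open>Fractional parts along increasing sequences\<close>

lemma card_less_Suc_filter:
  "card {k. k < Suc i \<and> P k} = card {k. k < i \<and> P k} + of_bool (P i)"
proof (cases "P i")
  case True
  then have "{k. k < Suc i \<and> P k} = insert i {k. k < i \<and> P k}" by (auto simp: less_Suc_eq)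
  with True show ?thesis by simp
next
  case False
  then have "{k. k < Suc i \<and> P k} = {k. k < i \<and> P k}" by (auto simp: less_Suc_eq)
  with False show ?thesis by simp
qed

lemma floor_frac_step:
  fixes a b :: real
  assumes "a < b" "b < a + 1"
  shows "frac a \<noteq> frac b" and "\<lfloor>b\<rfloor> = \<lfloor>a\<rfloor> + of_bool (frac b < frac a)"
proof -
  define d where "d = \<lfloor>b\<rfloor> - \<lfloor>a\<rfloor>"
  have ba: "b - a = of_int d + (frac b - frac a)" by (simp add: d_def frac_def)
  have "0 \<le> frac a" "frac a < 1" "0 \<le> frac b" "frac b < 1" by (simp_all add: frac_lt_1)
  with ba assms have "of_int d > (-1::real)" "of_int d < (2::real)" by linarith+
  then have "d = 0 \<or> d = 1" by linarith
  with ba assms have "d = of_bool (frac b < frac a)" "frac a \<noteq> frac b" by auto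
  then show "frac a \<noteq> frac b" "\<lfloor>b\<rfloor> = \<lfloor>a\<rfloor> + of_bool (frac b < frac a)"
    by (simp_all add: d_def)
qed

lemma floor_eq_card_frac_drops:
  fixes L :: "nat \<Rightarrow> real"
  assumes "L 0 = 0" "\<forall>k<i. L k < L (Suc k) \<and> L (Suc k) < L k + 1"
  shows "\<lfloor>L i\<rfloor> = int (card {k. k < i \<and> frac (L (Suc k)) < frac (L k)})"
  using assms(2)
proof (induction i)
  case (Suc i)
  then have IH: "\<lfloor>L i\<rfloor> = int (card {k. k < i \<and> frac (L (Suc k)) < frac (L k)})"
    and step: "L i < L (Suc i)" "L (Suc i) < L i + 1"
    by simp_all
  have "\<lfloor>L (Suc i)\<rfloor> = \<lfloor>L i\<rfloor> + of_bool (frac (L (Suc i)) < frac (L i))"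
    using floor_frac_step(2)[OF step] .
  also have "\<dots> = int (card {k. k < i \<and> frac (L (Suc k)) < frac (L k)}
                      + of_bool (frac (L (Suc i)) < frac (L i)))"
    by (simp add: IH)
  also have "\<dots> = int (card {k. k < Suc i \<and> frac (L (Suc k)) < frac (L k)})"
    by (simp only: card_less_Suc_filter)
  finally show ?case .
qed (simp add: assms(1))

section \<open>Lattice points and descents\<close>

lemma I_tilde_entry_eq_0:
  assumes "e \<in> I_tilde n s" "\<not> (1 \<le> i \<and> i \<le> n)"
  shows "e i = 0"
proof -
  from assms(2) have "i = 0 \<or> i = Suc n \<or> Suc n < i" by auto
  with assms(1) show ?thesis by (auto simp: I_tilde_def)
qed

lemma I_tilde_entry_lt:
  assumes "e \<in> I_tilde n s" "1 \<le> i" "i \<le> n"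
  shows "e i < s i"
  using assms by (simp add: I_tilde_def)

lemma I_tilde_ratio_neq:
  assumes "e \<in> I_tilde n s" "i \<le> n"
  shows "ratio n s e i \<noteq> ratio n s e (Suc i)"
  using assms by (simp add: I_tilde_def)

lemma I_tilde_ratio_lt_1:
  assumes "e \<in> I_tilde n s"
  shows "ratio n s e i < 1"
proof (cases "1 \<le> i \<and> i \<le> n")
  case True
  then have "e i < s_ext n s i" using I_tilde_entry_lt[OF assms] by (simp add: s_ext_def)
  then show ?thesis by (simp add: ratio_def)
qed (simp add: I_tilde_entry_eq_0[OF assms] ratio_def)

lemma I_tilde_ratio_eq_0_iff:
  assumes "e \<in> I_tilde n s"
  shows "ratio n s e i = 0 \<longleftrightarrow> e i = 0"
proof (cases "1 \<le> i \<and> i \<le> n")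
  case True
  then have "s_ext n s i \<noteq> 0" using I_tilde_entry_lt[OF assms, of i] by (simp add: s_ext_def)
  then show ?thesis by (simp add: ratio_def)
qed (simp add: I_tilde_entry_eq_0[OF assms] ratio_def)

lemma I_tilde_ratio_ends:
  assumes "e \<in> I_tilde n s"
  shows "ratio n s e 0 = 0" "ratio n s e (Suc n) = 0"
  using assms by (simp_all add: I_tilde_def ratio_def)

definition descents_before :: "nat \<Rightarrow> (nat \<Rightarrow> nat) \<Rightarrow> (nat \<Rightarrow> nat) \<Rightarrow> nat \<Rightarrow> nat" where
  "descents_before n s e i = card {k. k < i \<and> ratio n s e (Suc k) < ratio n s e k}"

lemma des_eq_descents_before: "des n s e = descents_before n s e (Suc n)"
proof -
  have "{i \<in> {0..n}. ratio n s e (i + 1) < ratio n s e i}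
      = {k. k < Suc n \<and> ratio n s e (Suc k) < ratio n s e k}" by auto
  then show ?thesis by (simp add: des_def descents_before_def)
qed

text \<open>The partial sums \<open>L\<close> of the lattice point attached to \<open>e\<close>.\<close>
definition lifted_ratio :: "nat \<Rightarrow> (nat \<Rightarrow> nat) \<Rightarrow> (nat \<Rightarrow> nat) \<Rightarrow> nat \<Rightarrow> real" where
  "lifted_ratio n s e i = real (descents_before n s e i) + ratio n s e i"

lemma frac_lifted_ratio:
  assumes "e \<in> I_tilde n s"
  shows "frac (lifted_ratio n s e i) = ratio n s e i"
proof -
  have "frac (real (descents_before n s e i) + ratio n s e i) = frac (ratio n s e i)"
    by (rule frac_add_int_left) simp
  with I_tilde_ratio_lt_1[OF assms] show ?thesis by (simp add: lifted_ratio_def frac_eq ratio_def)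
qed

lemma lifted_ratio_step:
  assumes e: "e \<in> I_tilde n s" and "k \<le> n"
  shows "lifted_ratio n s e k < lifted_ratio n s e (Suc k)"
    and "lifted_ratio n s e (Suc k) < lifted_ratio n s e k + 1"
proof -
  note I_tilde_ratio_neq[OF e \<open>k \<le> n\<close>]
  moreover have "0 \<le> ratio n s e k" "0 \<le> ratio n s e (Suc k)" by (simp_all add: ratio_def)
  moreover note I_tilde_ratio_lt_1[OF e, of k] I_tilde_ratio_lt_1[OF e, of "Suc k"]
  ultimately show "lifted_ratio n s e k < lifted_ratio n s e (Suc k)"
    "lifted_ratio n s e (Suc k) < lifted_ratio n s e k + 1"
    by (auto simp: lifted_ratio_def descents_before_def card_less_Suc_filter)
qed

lemma cone_point_lifted_ratio_mem:
  assumes pos: "\<forall>i\<in>{1..n}. s i > 0" and e: "e \<in> I_tilde n s"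
  shows "cone_point n s (lifted_ratio n s e)
           \<in> lattice_points (open_parallelepiped (lecture_hall_simplex n s))"
proof -
  have "lifted_ratio n s e 0 = 0"
    by (simp add: lifted_ratio_def descents_before_def I_tilde_ratio_ends[OF e])
  then have "cone_point n s (lifted_ratio n s e) \<in> open_parallelepiped (lecture_hall_simplex n s)"
    using lifted_ratio_step[OF e] by (auto simp: open_parallelepiped_lecture_hall_simplex[OF pos])
  moreover have "real (s j) * lifted_ratio n s e j \<in> \<int>" if "1 \<le> j" "j \<le> n" for j
  proof -
    have "s_ext n s j = s j" "real (s j) > 0" using that pos by (auto simp: s_ext_def)
    then have "real (s j) * lifted_ratio n s e j = of_nat (s j * descents_before n s e j + e j)"
      by (simp add: lifted_ratio_def ratio_def algebra_simps)
    then show ?thesis by simp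
  qed
  moreover have "lifted_ratio n s e (Suc n) \<in> \<int>"
    by (simp add: lifted_ratio_def I_tilde_ratio_ends[OF e])
  ultimately show ?thesis by (auto simp: lattice_points_def cone_point_def)
qed

lemma inj_on_cone_point_lifted_ratio:
  "inj_on (\<lambda>e. cone_point n s (lifted_ratio n s e)) (I_tilde n s)"
proof (rule inj_onI)
  fix e e' assume e: "e \<in> I_tilde n s" and e': "e' \<in> I_tilde n s"
    and eq: "cone_point n s (lifted_ratio n s e) = cone_point n s (lifted_ratio n s e')"
  show "e = e'"
  proof
    fix j show "e j = e' j"
    proof (cases "1 \<le> j \<and> j \<le> n")
      case True
      then have "s j > 0" using I_tilde_entry_lt[OF e, of j] by simp
      with True have "lifted_ratio n s e j = lifted_ratio n s e' j"
        using fun_cong[OF arg_cong[OF eq, of fst], of j] by (simp add: cone_point_def)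
      then have "ratio n s e j = ratio n s e' j"
        by (metis frac_lifted_ratio e e')
      then show ?thesis using True \<open>s j > 0\<close> by (simp add: ratio_def s_ext_def)
    next
      case False
      then show ?thesis using I_tilde_entry_eq_0[OF e] I_tilde_entry_eq_0[OF e'] by simp
    qed
  qed
qed

lemma I_tilde_of_fracs:
  assumes pos: "\<forall>i\<in>{1..n}. s i > 0"
    and L: "\<forall>k\<le>n. L k < L (Suc k) \<and> L (Suc k) < L k + 1" "L 0 = 0"
    and int: "\<forall>j\<in>{1..n}. real (s j) * L j \<in> \<int>" "L (Suc n) \<in> \<int>"
  obtains e where "e \<in> I_tilde n s" "\<And>i. i \<le> Suc n \<Longrightarrow> ratio n s e i = frac (L i)"
proof
  define e where "e i = (if 1 \<le> i \<and> i \<le> n then nat \<lfloor>real (s i) * frac (L i)\<rfloor> else 0)" for i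
  have e_val: "real (e i) = real (s i) * frac (L i)" if i: "1 \<le> i" "i \<le> n" for i
  proof -
    have "real (s i) * frac (L i) = real (s i) * L i - of_int (int (s i) * \<lfloor>L i\<rfloor>)"
      by (simp add: frac_def algebra_simps)
    also have "\<dots> \<in> \<int>" using int(1) i by auto
    finally show ?thesis using i by (simp add: e_def)
  qed
  show ratio: "ratio n s e i = frac (L i)" if i: "i \<le> Suc n" for i
  proof -
    consider "i = 0" | "i = Suc n" | "1 \<le> i" "i \<le> n"
      using i by (cases "i = 0"; cases "i = Suc n") auto
    then show ?thesis
    proof cases
      case 3
      with pos have "real (s i) > 0" by auto
      with 3 e_val show ?thesis by (simp add: ratio_def s_ext_def)
    qed (use L(2) int(2) in \<open>simp_all add: ratio_def e_def\<close>)
  qed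
  have "e i < s i" if "1 \<le> i" "i \<le> n" for i
  proof -
    have "real (e i) < real (s i)"
      using e_val[OF that] pos frac_lt_1[of "L i"] that by (simp add: mult_less_cancel_left1)
    then show ?thesis by simp
  qed
  moreover have "ratio n s e i \<noteq> ratio n s e (Suc i)" if "i \<le> n" for i
    using floor_frac_step(1)[of "L i" "L (Suc i)"] L(1) ratio that by simp
  ultimately show "e \<in> I_tilde n s" by (auto simp: I_tilde_def e_def)
qed

lemma lattice_point_eq_cone_point_lifted_ratio:
  assumes pos: "\<forall>i\<in>{1..n}. s i > 0"
    and p: "p \<in> lattice_points (open_parallelepiped (lecture_hall_simplex n s))"
  shows "\<exists>e\<in>I_tilde n s. p = cone_point n s (lifted_ratio n s e)"
proof -
  obtain L where p_eq: "p = cone_point n s L" and L0: "L 0 = 0"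
    and L: "\<forall>k\<le>n. L k < L (Suc k) \<and> L (Suc k) < L k + 1"
    using p by (auto simp: lattice_points_def open_parallelepiped_lecture_hall_simplex[OF pos])
  have coords: "fst p j \<in> \<int>" "snd p \<in> \<int>" for j
    using p by (simp_all add: lattice_points_def)
  have int: "\<forall>j\<in>{1..n}. real (s j) * L j \<in> \<int>"
  proof
    fix j assume "j \<in> {1..n}"
    with coords(1)[of j] show "real (s j) * L j \<in> \<int>" by (simp add: p_eq cone_point_def)
  qed
  moreover have "L (Suc n) \<in> \<int>"
    using coords(2) by (simp add: p_eq cone_point_def)
  ultimately obtain e where e: "e \<in> I_tilde n s"
    and ratio: "\<And>i. i \<le> Suc n \<Longrightarrow> ratio n s e i = frac (L i)"
    using I_tilde_of_fracs[OF pos L L0] by blast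
  have "lifted_ratio n s e i = L i" if "i \<le> Suc n" for i
  proof -
    have "{k. k < i \<and> frac (L (Suc k)) < frac (L k)}
        = {k. k < i \<and> ratio n s e (Suc k) < ratio n s e k}"
      using ratio that by auto
    then have "\<lfloor>L i\<rfloor> = int (descents_before n s e i)"
      using floor_eq_card_frac_drops[of L i] L0 L that by (simp add: descents_before_def)
    then show ?thesis
      using ratio[OF that] by (simp add: lifted_ratio_def frac_def)
  qed
  then have "p = cone_point n s (lifted_ratio n s e)"
    unfolding p_eq by (intro cone_point_cong) simp
  with e show ?thesis by blast
qed

lemma bij_betw_I_tilde_lattice_points:
  assumes pos: "\<forall>i\<in>{1..n}. s i > 0"
  shows "bij_betw (\<lambda>e. cone_point n s (lifted_ratio n s e)) (I_tilde n s)
           (lattice_points (open_parallelepiped (lecture_hall_simplex n s)))"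
  unfolding bij_betw_def
  using inj_on_cone_point_lifted_ratio cone_point_lifted_ratio_mem[OF pos]
    lattice_point_eq_cone_point_lifted_ratio[OF pos]
  by blast

lemma local_hstar_lecture_hall_simplex_des:
  assumes pos: "\<forall>i\<in>{1..n}. s i > 0"
  shows "local_hstar (lecture_hall_simplex n s) = (\<Sum>e\<in>I_tilde n s. monom 1 (des n s e))"
proof -
  have "snd (cone_point n s (lifted_ratio n s e)) = real (des n s e)" if "e \<in> I_tilde n s" for e
    using I_tilde_ratio_ends[OF that]
    by (simp add: cone_point_def lifted_ratio_def des_eq_descents_before)
  then show ?thesis
    unfolding local_hstar_def
    using sum.reindex_bij_betw[OF bij_betw_I_tilde_lattice_points[OF pos],
        of "\<lambda>p. monom 1 (nat \<lfloor>snd p\<rfloor>)", symmetric]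
    by simp
qed

section \<open>Complementing the nonzero entries\<close>

definition complement_nonzero :: "nat \<Rightarrow> (nat \<Rightarrow> nat) \<Rightarrow> (nat \<Rightarrow> nat) \<Rightarrow> nat \<Rightarrow> nat" where
  "complement_nonzero n s e i = (if e i = 0 then 0 else s_ext n s i - e i)"

lemma ratio_complement_nonzero:
  assumes e: "e \<in> I_tilde n s"
  shows "ratio n s (complement_nonzero n s e) i = (if e i = 0 then 0 else 1 - ratio n s e i)"
proof (cases "e i = 0")
  case False
  then have "1 \<le> i \<and> i \<le> n" using I_tilde_entry_eq_0[OF e, of i] by metis
  then have "e i < s i" "s_ext n s i = s i"
    using I_tilde_entry_lt[OF e, of i] by (auto simp: s_ext_def)
  then have "real (complement_nonzero n s e i) = real (s i) - real (e i)" "real (s i) > 0"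
    using False by (auto simp: complement_nonzero_def)
  with False \<open>s_ext n s i = s i\<close> show ?thesis by (simp add: ratio_def diff_divide_distrib)
qed (simp add: complement_nonzero_def ratio_def)

lemma complement_nonzero_mem_I_tilde:
  assumes e: "e \<in> I_tilde n s"
  shows "complement_nonzero n s e \<in> I_tilde n s"
proof -
  have "complement_nonzero n s e i < s i" if "1 \<le> i" "i \<le> n" for i
    using I_tilde_entry_lt[OF e that] that by (auto simp: complement_nonzero_def s_ext_def)
  moreover have
    "ratio n s (complement_nonzero n s e) i \<noteq> ratio n s (complement_nonzero n s e) (Suc i)"
    if "i \<le> n" for i
  proof -
    note I_tilde_ratio_neq[OF e that]
    with I_tilde_ratio_lt_1[OF e, of i] I_tilde_ratio_lt_1[OF e, of "Suc i"] show ?thesis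
      by (auto simp: ratio_complement_nonzero[OF e] I_tilde_ratio_eq_0_iff[OF e, symmetric])
  qed
  moreover have "complement_nonzero n s e i = 0" if "\<not> (1 \<le> i \<and> i \<le> n)" for i
    using I_tilde_entry_eq_0[OF e that] by (simp add: complement_nonzero_def)
  ultimately show ?thesis unfolding I_tilde_def by auto
qed

lemma complement_nonzero_involution:
  assumes "e \<in> I_tilde n s"
  shows "complement_nonzero n s (complement_nonzero n s e) = e"
proof
  fix i show "complement_nonzero n s (complement_nonzero n s e) i = e i"
  proof (cases "1 \<le> i \<and> i \<le> n")
    case True
    then show ?thesis
      using I_tilde_entry_lt[OF assms, of i] by (auto simp: complement_nonzero_def s_ext_def)
  qed (simp add: complement_nonzero_def I_tilde_entry_eq_0[OF assms])
qed

lemma bij_betw_complement_nonzero: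
  "bij_betw (complement_nonzero n s) (I_tilde n s) (I_tilde n s)"
  by (rule bij_betw_byWitness[where f' = "complement_nonzero n s"])
    (auto simp: complement_nonzero_involution complement_nonzero_mem_I_tilde)

lemma asc_add_des:
  assumes "e \<in> I_tilde n s"
  shows "asc n s e + des n s e = Suc n"
proof -
  let ?A = "{i \<in> {0..n}. ratio n s e i < ratio n s e (i + 1)}"
    and ?B = "{i \<in> {0..n}. ratio n s e i > ratio n s e (i + 1)}"
  have "asc n s e + des n s e = card (?A \<union> ?B)"
    unfolding asc_def des_def by (rule card_Un_disjoint[symmetric]) auto
  also have "?A \<union> ?B = {0..n}"
  proof
    show "{0..n} \<subseteq> ?A \<union> ?B"
    proof
      fix i assume "i \<in> {0..n}"
      with I_tilde_ratio_neq[OF assms, of i] show "i \<in> ?A \<union> ?B" by auto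
    qed
  qed auto
  finally show ?thesis by simp
qed

text \<open>Descents of the complement at \<open>i\<close> are the ascents of \<open>e\<close>, corrected by the boundaries of
  the runs of nonzero entries of \<open>e\<close>; these corrections telescope away since \<open>e\<close> vanishes at
  both ends.\<close>
lemma des_complement_nonzero_add_des:
  assumes e: "e \<in> I_tilde n s"
  shows "des n s (complement_nonzero n s e) + des n s e = Suc n"
proof -
  define r where "r = ratio n s e"
  define z :: "nat \<Rightarrow> int" where "z i = of_bool (r i \<noteq> 0)" for i
  have r: "0 \<le> r i" "r i < 1" for i
    using I_tilde_ratio_lt_1[OF e] by (simp_all add: r_def ratio_def)
  have r_complement:
    "ratio n s (complement_nonzero n s e) i = (if r i = 0 then 0 else 1 - r i)" for i
    using ratio_complement_nonzero[OF e, of i] I_tilde_ratio_eq_0_iff[OF e, of i] by (simp add: r_def)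
  have step: "of_bool (ratio n s (complement_nonzero n s e) (Suc i)
                       < ratio n s (complement_nonzero n s e) i)
      + of_bool (r (Suc i) < r i) = 1 + z i - z (Suc i)" if "i \<le> n" for i
  proof -
    have "r i \<noteq> r (Suc i)" using I_tilde_ratio_neq[OF e that] by (simp add: r_def)
    with r[of i] r[of "Suc i"] show ?thesis
      by (cases "r i = 0"; cases "r (Suc i) = 0") (auto simp: r_complement z_def)
  qed
  have des_sum:
    "int (des n s e') = (\<Sum>i<Suc n. of_bool (ratio n s e' (Suc i) < ratio n s e' i))" for e'
    by (simp add: des_def lessThan_Suc_atMost atLeast0AtMost Collect_conj_eq atMost_def)
  have "int (des n s (complement_nonzero n s e) + des n s e)
      = (\<Sum>i<Suc n. of_bool (ratio n s (complement_nonzero n s e) (Suc i)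
                                < ratio n s (complement_nonzero n s e) i))
        + (\<Sum>i<Suc n. of_bool (r (Suc i) < r i))"
    by (simp only: of_nat_add des_sum r_def)
  also have "\<dots> = (\<Sum>i<Suc n. 1 + (z i - z (Suc i)))"
    unfolding sum.distrib[symmetric] using step by (intro sum.cong) auto
  also have "\<dots> = int (Suc n) + (z 0 - z (Suc n))"
    by (simp only: sum.distrib sum_lessThan_telescope') simp
  also have "z 0 = z (Suc n)"
    using I_tilde_ratio_ends[OF e] by (simp add: z_def r_def)
  finally show ?thesis by simp
qed

lemma des_complement_nonzero:
  assumes "e \<in> I_tilde n s"
  shows "des n s (complement_nonzero n s e) = asc n s e"
  using asc_add_des[OF assms] des_complement_nonzero_add_des[OF assms] by simp

theorem proposition3p3:
  fixes n :: nat and s :: "nat \<Rightarrow> nat"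
  assumes "\<forall>i\<in>{1..n}. s i > 0"
  shows "local_hstar (lecture_hall_simplex n s) = (\<Sum>e\<in>I_tilde n s. monom 1 (asc n s e))
       \<and> local_hstar (lecture_hall_simplex n s) = (\<Sum>e\<in>I_tilde n s. monom 1 (des n s e))"
proof -
  have "(\<Sum>e\<in>I_tilde n s. monom (1::int) (des n s e))
      = (\<Sum>e\<in>I_tilde n s. monom 1 (des n s (complement_nonzero n s e)))"
    by (rule sum.reindex_bij_betw[OF bij_betw_complement_nonzero, symmetric])
  also have "\<dots> = (\<Sum>e\<in>I_tilde n s. monom 1 (asc n s e))"
    by (intro sum.cong) (simp_all add: des_complement_nonzero)
  finally show ?thesis
    using local_hstar_lecture_hall_simplex_des[OF assms] by simp
qed

end
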